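(* Let $g$ be an even $C^1$ function near $0\in\mathbb{C}$ which is homogeneous of degree $m>1$ (i.e. $g(tz)=t^m g(z)$ for all $t>0$), and suppose $g$ satisfies the polynomial condition with respect to an odd polynomial $p=p_{2s-1}+p_{2s+1}+\cdots+p_{2n-1}$, where each $p_k$ is a homogeneous holomorphic polynomial of degree $k$ and $p_{2s-1}\neq 0$. Then $p_{2s-1}$ is complex-symmetric, and $$\operatorname{Im}\Bigl(\frac{\partial p_{2s-1}}{\partial\zeta_2}(z,\bar z)\cdot g(z)\Bigr)\ge 0\quad\text{for all } z\in\Gamma,$$ where $\Gamma$ is the unit circle.
   Context: Polynomial condition: let $g$ be an even $C^1$ function defined near $0\in\mathbb{C}$ with $g(z)=o(z)$ as $z\to0$. We say $g$ satisfies the polynomial condition with respect to a holomorphic polynomial $p(\zeta_1,\zeta_2)$ if for every $C^1$ function $R$ defined near $0$ with $R(z)=o(g(z))$ as $z\to0$, both $\operatorname{Im} p(z,\bar z+g(z)+R(z))>0$ and $\operatorname{Im} p(z,\bar z-g(z)+R(z))<0$ hold for all $z\neq0$ sufficiently close to $0$. A homogeneous polynomial $q(\zeta_1,\zeta_2)=\sum_{k=0}^{d}a_k\zeta_1^k\zeta_2^{d-k}$ of degree $d$ is called complex-symmetric if $a_k=\overline{a_{d-k}}$ for all $k=0,\dots,d$ (equivalently, $q(z,\bar z)$ is real for all $z\in\mathbb{C}$). *)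

theory Defs
  imports "HOL-Analysis.Analysis" "HOL-Library.Landau_Symbols"
begin

definition C1_near0 :: "(complex \<Rightarrow> complex) \<Rightarrow> bool" where
  "C1_near0 f \<longleftrightarrow> (\<exists>r>0. \<exists>D :: complex \<Rightarrow> (complex \<Rightarrow>\<^sub>L complex).
      (\<forall>z\<in>ball 0 r. (f has_derivative blinfun_apply (D z)) (at z)) \<and>
      continuous_on (ball 0 r) D)"

text \<open>A holomorphic polynomial p in two variables, given by its coefficients:
  c i j is the coefficient of zeta1^i zeta2^j, total degree at most N.\<close>
definition poly2 :: "(nat \<Rightarrow> nat \<Rightarrow> complex) \<Rightarrow> nat \<Rightarrow> complex \<Rightarrow> complex \<Rightarrow> complex" where
  "poly2 c N z w = (\<Sum>i\<le>N. \<Sum>j\<le>N - i. c i j * z ^ i * w ^ j)"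

definition hpart :: "(nat \<Rightarrow> nat \<Rightarrow> complex) \<Rightarrow> nat \<Rightarrow> complex \<Rightarrow> complex \<Rightarrow> complex" where
  "hpart c k z w = (\<Sum>i\<le>k. c i (k - i) * z ^ i * w ^ (k - i))"

text \<open>Complex-symmetric homogeneous polynomial of degree d with coefficients a k
  (coefficient of zeta1^k zeta2^(d-k)).\<close>
definition complex_symmetric :: "(nat \<Rightarrow> complex) \<Rightarrow> nat \<Rightarrow> bool" where
  "complex_symmetric a d \<longleftrightarrow> (\<forall>k\<le>d. a k = cnj (a (d - k)))"

definition polynomial_condition ::
  "(complex \<Rightarrow> complex) \<Rightarrow> (complex \<Rightarrow> complex \<Rightarrow> complex) \<Rightarrow> bool" where
  "polynomial_condition g P \<longleftrightarrow>
     (\<forall>R. C1_near0 R \<and> R \<in> o[at 0](g) \<longrightarrow>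
        (\<forall>\<^sub>F z in at 0. Im (P z (cnj z + g z + R z)) > 0 \<and>
                        Im (P z (cnj z - g z + R z)) < 0))"

end

theory Submission
  imports Defs
begin

text \<open>Let d = 2s - 1 and write p = p_d + (higher terms). On the ray t w (t > 0) homogeneity gives
  cnj (t w) +- g (t w) = t (cnj w +- t^(m-1) g w), so after division by t^d the two sign
  conditions say Im q_t(w, cnj w +- t^(m-1) g w) > 0 resp. < 0, where q_t(z, w) = t^(-d) p(t z, t w)
  tends to p_d as t -> 0. In the limit Im p_d(w, cnj w) = 0 on the unit circle; there
  w^d (p_d(w, cnj w) - cnj (p_d(w, cnj w))) is a polynomial in w^2 whose coefficients measure the
  failure of complex symmetry, and it vanishes on the whole circle, hence identically. Subtracting
  the two conditions and dividing by 2 t^(m-1) yields a central difference quotient of q_t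
  in the second variable, whose limit gives Im (d p_d/d zeta_2 (w, cnj w) * g w) >= 0.\<close>

text \<open>Since 0 ^ 0 = 1 and nat subtraction truncates, the factor 0 ^ (i + j - d) kills exactly
  the monomials of degree above d; those below d vanish by assumption.\<close>

lemma sum_triangle_degree_part:
  fixes c F :: "nat \<Rightarrow> nat \<Rightarrow> 'a::comm_ring_1"
  assumes low: "\<forall>i j. i + j < d \<longrightarrow> c i j = 0" and "d \<le> N"
  shows "(\<Sum>i\<le>N. \<Sum>j\<le>N - i. c i j * 0 ^ (i + j - d) * F i j) =
         (\<Sum>i\<le>d. c i (d - i) * F i (d - i))"
proof -
  have "(\<Sum>j\<le>N - i. c i j * 0 ^ (i + j - d) * F i j) =
        (if i \<le> d then c i (d - i) * F i (d - i) else 0)" if "i \<le> N" for i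
  proof -
    have "(\<Sum>j\<le>N - i. c i j * 0 ^ (i + j - d) * F i j) =
          (\<Sum>j\<le>N - i. if i \<le> d \<and> j = d - i then c i (d - i) * F i (d - i) else 0)"
    proof (intro sum.cong refl)
      fix j
      consider "i + j < d" | "i + j > d" | "i \<le> d" "j = d - i"
        by linarith
      then show "c i j * 0 ^ (i + j - d) * F i j =
                 (if i \<le> d \<and> j = d - i then c i (d - i) * F i (d - i) else 0)"
        by cases (use low in \<open>auto simp: power_0_left\<close>)
    qed
    then show ?thesis
      using that \<open>d \<le> N\<close> by (simp add: sum.delta' diff_le_mono)
  qed
  then have "(\<Sum>i\<le>N. \<Sum>j\<le>N - i. c i j * 0 ^ (i + j - d) * F i j) =
             (\<Sum>i\<le>N. if i \<le> d then c i (d - i) * F i (d - i) else 0)"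
    by (intro sum.cong) auto
  also have "\<dots> = (\<Sum>i\<in>{i\<in>{..N}. i \<le> d}. c i (d - i) * F i (d - i))"
    by (rule sum.inter_filter[symmetric]) simp
  also have "{i\<in>{..N}. i \<le> d} = {..d}"
    using \<open>d \<le> N\<close> by auto
  finally show ?thesis .
qed

definition scaled_poly2 ::
  "(nat \<Rightarrow> nat \<Rightarrow> complex) \<Rightarrow> nat \<Rightarrow> nat \<Rightarrow>
   complex \<Rightarrow> complex \<Rightarrow> complex \<Rightarrow> complex" where
  "scaled_poly2 c N d t z w = (\<Sum>i\<le>N. \<Sum>j\<le>N - i. c i j * t ^ (i + j - d) * z ^ i * w ^ j)"

definition scaled_poly2_quotient ::
  "(nat \<Rightarrow> nat \<Rightarrow> complex) \<Rightarrow> nat \<Rightarrow> nat \<Rightarrow>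
   complex \<Rightarrow> complex \<Rightarrow> complex \<Rightarrow> complex \<Rightarrow> complex" where
  "scaled_poly2_quotient c N d t z a h =
     (\<Sum>i\<le>N. \<Sum>j\<le>N - i. c i j * t ^ (i + j - d) * z ^ i *
        (\<Sum>k<j. (a - h) ^ (j - Suc k) * (a + h) ^ k))"

lemma poly2_scaling:
  assumes low: "\<forall>i j. i + j < d \<longrightarrow> c i j = 0"
  shows "poly2 c N (t * z) (t * w) = t ^ d * scaled_poly2 c N d t z w"
  unfolding poly2_def scaled_poly2_def sum_distrib_left
proof (intro sum.cong refl)
  fix i j
  show "c i j * (t * z) ^ i * (t * w) ^ j = t ^ d * (c i j * t ^ (i + j - d) * z ^ i * w ^ j)"
  proof (cases "i + j < d")
    case False
    then have "t ^ (i + j) = t ^ d * t ^ (i + j - d)"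
      by (simp flip: power_add)
    then show ?thesis
      by (simp add: power_mult_distrib power_add mult_ac)
  qed (use low in simp)
qed

lemma scaled_poly2_central_difference:
  "scaled_poly2 c N d t z (a + h) - scaled_poly2 c N d t z (a - h) =
   2 * h * scaled_poly2_quotient c N d t z a h"
proof -
  have power_difference:
    "(a + h) ^ j - (a - h) ^ j = 2 * h * (\<Sum>k<j. (a - h) ^ (j - Suc k) * (a + h) ^ k)" for j
    by (subst power_diff_sumr2) simp
  have "scaled_poly2 c N d t z (a + h) - scaled_poly2 c N d t z (a - h) =
        (\<Sum>i\<le>N. \<Sum>j\<le>N - i. c i j * t ^ (i + j - d) * z ^ i * ((a + h) ^ j - (a - h) ^ j))"
    by (simp add: scaled_poly2_def right_diff_distrib sum_subtractf)
  then show ?thesis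
    by (simp add: power_difference scaled_poly2_quotient_def sum_distrib_left mult_ac)
qed

lemma deriv_hpart:
  "deriv (hpart c d z) w = (\<Sum>i\<le>d. c i (d - i) * z ^ i * (of_nat (d - i) * w ^ (d - i - 1)))"
  unfolding hpart_def by (rule DERIV_imp_deriv) (auto intro!: derivative_eq_intros simp: mult_ac)

lemma scaled_poly2_tendsto_hpart:
  assumes "\<forall>i j. i + j < d \<longrightarrow> c i j = 0" "d \<le> N"
    and "(t \<longlongrightarrow> 0) F" "(w \<longlongrightarrow> w0) F"
  shows "((\<lambda>x. scaled_poly2 c N d (t x) z (w x)) \<longlongrightarrow> hpart c d z w0) F"
proof -
  have "((\<lambda>x. scaled_poly2 c N d (t x) z (w x)) \<longlongrightarrow> scaled_poly2 c N d 0 z w0) F"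
    unfolding scaled_poly2_def by (intro tendsto_intros assms)
  also have "scaled_poly2 c N d 0 z w0 = hpart c d z w0"
    using sum_triangle_degree_part[OF assms(1,2), of "\<lambda>i j. z ^ i * w0 ^ j"]
    by (simp add: scaled_poly2_def hpart_def mult.assoc)
  finally show ?thesis .
qed

lemma scaled_poly2_quotient_tendsto_deriv:
  assumes "\<forall>i j. i + j < d \<longrightarrow> c i j = 0" "d \<le> N"
    and "(t \<longlongrightarrow> 0) F" "(h \<longlongrightarrow> 0) F"
  shows "((\<lambda>x. scaled_poly2_quotient c N d (t x) z a (h x)) \<longlongrightarrow> deriv (hpart c d z) a) F"
proof -
  have telescope_at_0: "(\<Sum>k<j. a ^ (j - Suc k) * a ^ k) = of_nat j * a ^ (j - 1)" for j
    by (simp flip: power_add)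
  have "((\<lambda>x. scaled_poly2_quotient c N d (t x) z a (h x)) \<longlongrightarrow>
         scaled_poly2_quotient c N d 0 z a 0) F"
    unfolding scaled_poly2_quotient_def by (intro tendsto_intros assms)
  also have "scaled_poly2_quotient c N d 0 z a 0 = deriv (hpart c d z) a"
    using sum_triangle_degree_part[OF assms(1,2), of "\<lambda>i j. z ^ i * (of_nat j * a ^ (j - 1))"]
    by (simp add: scaled_poly2_quotient_def deriv_hpart telescope_at_0 mult.assoc)
  finally show ?thesis .
qed

lemma hpart_limits_of_sign_conditions:
  fixes t :: "'b \<Rightarrow> complex" and \<tau> :: "'b \<Rightarrow> real"
  assumes low: "\<forall>i j. i + j < d \<longrightarrow> c i j = 0" and "d \<le> N" and "F \<noteq> bot"
    and t: "(t \<longlongrightarrow> 0) F" and \<tau>: "(\<tau> \<longlongrightarrow> 0) F" "\<forall>\<^sub>F x in F. \<tau> x > 0"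
    and sign: "\<forall>\<^sub>F x in F.
      Im (scaled_poly2 c N d (t x) z (a + of_real (\<tau> x) * G)) > 0 \<and>
      Im (scaled_poly2 c N d (t x) z (a - of_real (\<tau> x) * G)) < 0"
  shows "Im (hpart c d z a) = 0" and "Im (deriv (hpart c d z) a * G) \<ge> 0"
proof -
  have h: "((\<lambda>x. of_real (\<tau> x) * G) \<longlongrightarrow> 0) F"
    using \<tau>(1) by (auto intro!: tendsto_eq_intros)
  have plus: "((\<lambda>x. scaled_poly2 c N d (t x) z (a + of_real (\<tau> x) * G)) \<longlongrightarrow> hpart c d z a) F"
    by (rule scaled_poly2_tendsto_hpart[OF low \<open>d \<le> N\<close> t]) (use tendsto_add[OF tendsto_const h] in simp)
  have minus: "((\<lambda>x. scaled_poly2 c N d (t x) z (a - of_real (\<tau> x) * G)) \<longlongrightarrow> hpart c d z a) F"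
    by (rule scaled_poly2_tendsto_hpart[OF low \<open>d \<le> N\<close> t]) (use tendsto_diff[OF tendsto_const h] in simp)
  have "Im (hpart c d z a) \<ge> 0"
    by (rule tendsto_lowerbound[OF tendsto_Im[OF plus]]) (use sign \<open>F \<noteq> bot\<close> in \<open>auto elim: eventually_mono\<close>)
  moreover have "Im (hpart c d z a) \<le> 0"
    by (rule tendsto_upperbound[OF tendsto_Im[OF minus]]) (use sign \<open>F \<noteq> bot\<close> in \<open>auto elim: eventually_mono\<close>)
  ultimately show "Im (hpart c d z a) = 0"
    by simp
  have quotient: "((\<lambda>x. scaled_poly2_quotient c N d (t x) z a (of_real (\<tau> x) * G) * G) \<longlongrightarrow>
                   deriv (hpart c d z) a * G) F"
    by (intro tendsto_mult_right scaled_poly2_quotient_tendsto_deriv low \<open>d \<le> N\<close> t h)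
  show "Im (deriv (hpart c d z) a * G) \<ge> 0"
  proof (rule tendsto_lowerbound[OF tendsto_Im[OF quotient] _ \<open>F \<noteq> bot\<close>])
    show "\<forall>\<^sub>F x in F. 0 \<le> Im (scaled_poly2_quotient c N d (t x) z a (of_real (\<tau> x) * G) * G)"
      using sign \<tau>(2)
    proof eventually_elim
      case (elim x)
      then have "0 < Im (2 * (of_real (\<tau> x) * G) * scaled_poly2_quotient c N d (t x) z a (of_real (\<tau> x) * G))"
        by (simp flip: scaled_poly2_central_difference)
      then have "0 < 2 * \<tau> x * Im (scaled_poly2_quotient c N d (t x) z a (of_real (\<tau> x) * G) * G)"
        by (simp add: algebra_simps)
      with elim show ?case
        by (simp add: zero_less_mult_iff)
    qed
  qed
qed

lemma eventually_at_right_on_ray: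
  fixes w :: "'a::real_normed_div_algebra"
  assumes "eventually P (at 0)" and "w \<noteq> 0"
  shows "\<forall>\<^sub>F t in at_right 0. P (of_real t * w)"
proof (rule eventually_compose_filterlim[OF assms(1)], rule filterlim_atI)
  show "((\<lambda>t. of_real t * w) \<longlongrightarrow> 0) (at_right 0)"
    by (auto intro!: tendsto_eq_intros)
  show "\<forall>\<^sub>F t in at_right 0. of_real t * w \<noteq> 0"
    using \<open>w \<noteq> 0\<close> by (auto intro: eventually_mono[OF eventually_at_right_less])
qed

lemma sign_conditions_on_ray:
  assumes g_hom: "\<forall>t>0. \<forall>z. g (complex_of_real t * z) = complex_of_real (t powr m) * g z"
    and low: "\<forall>i j. i + j < d \<longrightarrow> c i j = 0"
    and sign: "\<forall>\<^sub>F z in at 0. Im (poly2 c N z (cnj z + g z)) > 0 \<and> Im (poly2 c N z (cnj z - g z)) < 0"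
    and "w \<noteq> 0"
  shows "\<forall>\<^sub>F t in at_right 0.
    Im (scaled_poly2 c N d (of_real t) w (cnj w + of_real (t powr (m - 1)) * g w)) > 0 \<and>
    Im (scaled_poly2 c N d (of_real t) w (cnj w - of_real (t powr (m - 1)) * g w)) < 0"
  using eventually_at_right_on_ray[OF sign \<open>w \<noteq> 0\<close>] eventually_at_right_less
proof eventually_elim
  case (elim t)
  have "t powr m = t * t powr (m - 1)"
    using \<open>t > 0\<close> by (simp add: powr_mult_base)
  then have "g (of_real t * w) = of_real t * (of_real (t powr (m - 1)) * g w)"
    using g_hom \<open>t > 0\<close> by simp
  then have "cnj (of_real t * w) + e * g (of_real t * w) =
             of_real t * (cnj w + e * of_real (t powr (m - 1)) * g w)" for e
    by (simp add: algebra_simps)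
  then have "Im (poly2 c N (of_real t * w) (cnj (of_real t * w) + e * g (of_real t * w))) =
             t ^ d * Im (scaled_poly2 c N d (of_real t) w (cnj w + e * of_real (t powr (m - 1)) * g w))" for e
    by (simp add: poly2_scaling[OF low] flip: of_real_power)
  from this[of 1] this[of "-1"] elim show ?case
    by (simp add: zero_less_mult_iff mult_less_0_iff)
qed

lemma lowest_part_on_ray:
  assumes "m > 1"
    and g_hom: "\<forall>t>0. \<forall>z. g (complex_of_real t * z) = complex_of_real (t powr m) * g z"
    and low: "\<forall>i j. i + j < d \<longrightarrow> c i j = 0" and "d \<le> N"
    and sign: "\<forall>\<^sub>F z in at 0. Im (poly2 c N z (cnj z + g z)) > 0 \<and> Im (poly2 c N z (cnj z - g z)) < 0"
    and "w \<noteq> 0"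
  shows "Im (hpart c d w (cnj w)) = 0" and "Im (deriv (hpart c d w) (cnj w) * g w) \<ge> 0"
proof -
  have "((\<lambda>t::real. t powr (m - 1)) \<longlongrightarrow> 0) (at_right 0)"
    using \<open>m > 1\<close>
    by (intro tendsto_zero_powrI[of "\<lambda>t. t" _ "\<lambda>_. m - 1" "m - 1"])
       (auto intro!: tendsto_ident_at eventually_mono[OF eventually_at_right_less])
  moreover have "\<forall>\<^sub>F t in at_right 0. t powr (m - 1) > (0::real)"
    by (auto intro: eventually_mono[OF eventually_at_right_less])
  moreover have "((\<lambda>t. complex_of_real t) \<longlongrightarrow> 0) (at_right 0)"
    by (auto intro!: tendsto_eq_intros)
  ultimately show "Im (hpart c d w (cnj w)) = 0" and "Im (deriv (hpart c d w) (cnj w) * g w) \<ge> 0"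
    using hpart_limits_of_sign_conditions[OF low \<open>d \<le> N\<close> trivial_limit_at_right_real]
      sign_conditions_on_ray[OF g_hom low sign \<open>w \<noteq> 0\<close>]
    by blast+
qed

lemma infinite_unit_circle: "infinite (sphere (0::complex) 1)"
proof -
  have "uncountable (sphere (0::complex) 1)"
    by (rule connected_uncountable[where a = 1 and b = "-1"]) (auto intro: connected_sphere)
  then show ?thesis
    using countable_finite by blast
qed

lemma hpart_minus_cnj_on_circle:
  assumes "norm w = 1"
  shows "w ^ d * (hpart c d w (cnj w) - cnj (hpart c d w (cnj w))) =
         (\<Sum>k\<le>d. (c k (d - k) - cnj (c (d - k) k)) * (w\<^sup>2) ^ k)"
proof -
  have "w * cnj w = 1"
    using complex_norm_square[of w] assms by simp
  have unimodular: "w ^ d * (w ^ k * cnj w ^ (d - k)) = (w\<^sup>2) ^ k" if "k \<le> d" for k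
  proof -
    have "w ^ d = w ^ k * w ^ (d - k)"
      using that by (simp flip: power_add)
    then have "w ^ d * (w ^ k * cnj w ^ (d - k)) = (w ^ k)\<^sup>2 * (w * cnj w) ^ (d - k)"
      by (simp add: power_mult_distrib power2_eq_square mult_ac)
    with \<open>w * cnj w = 1\<close> show ?thesis
      by (simp flip: power_mult add: mult.commute)
  qed
  have "cnj (hpart c d w (cnj w)) = (\<Sum>k\<le>d. cnj (c k (d - k)) * cnj w ^ k * w ^ (d - k))"
    by (simp add: hpart_def)
  also have "\<dots> = (\<Sum>k\<le>d. cnj (c (d - k) k) * w ^ k * cnj w ^ (d - k))"
    by (rule sum.reindex_bij_witness[of _ "\<lambda>k. d - k" "\<lambda>k. d - k"]) auto
  finally have "hpart c d w (cnj w) - cnj (hpart c d w (cnj w)) =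
      (\<Sum>k\<le>d. (c k (d - k) - cnj (c (d - k) k)) * (w ^ k * cnj w ^ (d - k)))"
    by (simp add: hpart_def sum_subtractf[symmetric] algebra_simps)
  then have "w ^ d * (hpart c d w (cnj w) - cnj (hpart c d w (cnj w))) =
      (\<Sum>k\<le>d. (c k (d - k) - cnj (c (d - k) k)) * (w ^ d * (w ^ k * cnj w ^ (d - k))))"
    by (simp add: sum_distrib_left mult.left_commute[of "w ^ d"])
  also have "\<dots> = (\<Sum>k\<le>d. (c k (d - k) - cnj (c (d - k) k)) * (w\<^sup>2) ^ k)"
    by (intro sum.cong refl) (simp add: unimodular)
  finally show ?thesis .
qed

lemma complex_symmetric_if_real_on_circle:
  assumes real: "\<forall>w. norm w = 1 \<longrightarrow> Im (hpart c d w (cnj w)) = 0"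
  shows "complex_symmetric (\<lambda>k. c k (d - k)) d"
proof -
  define B where "B k = c k (d - k) - cnj (c (d - k) k)" for k
  have "sphere 0 1 \<subseteq> {x. (\<Sum>k\<le>d. B k * x ^ k) = 0}"
  proof
    fix x :: complex
    assume "x \<in> sphere 0 1"
    define w where "w = csqrt x"
    have "norm w = 1"
      using \<open>x \<in> sphere 0 1\<close> by (simp add: w_def)
    then have "Im (hpart c d w (cnj w)) = 0"
      using real by blast
    then have "hpart c d w (cnj w) - cnj (hpart c d w (cnj w)) = 0"
      by (simp add: complex_eq_iff)
    moreover have "w\<^sup>2 = x"
      by (simp add: w_def)
    ultimately show "x \<in> {x. (\<Sum>k\<le>d. B k * x ^ k) = 0}"
      using hpart_minus_cnj_on_circle[OF \<open>norm w = 1\<close>, of d c] by (simp add: B_def)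
  qed
  then have "infinite {x. (\<Sum>k\<le>d. B k * x ^ k) = 0}"
    using infinite_unit_circle finite_subset by blast
  then have "\<forall>k\<le>d. B k = 0"
    using polyfun_finite_roots by blast
  then show ?thesis
    unfolding complex_symmetric_def B_def by simp
qed

lemma polynomial_condition_sign_conditions:
  assumes "polynomial_condition g P"
  shows "\<forall>\<^sub>F z in at 0. Im (P z (cnj z + g z)) > 0 \<and> Im (P z (cnj z - g z)) < 0"
proof -
  have "C1_near0 (\<lambda>_. 0)"
    unfolding C1_near0_def
    by (rule exI[of _ 1], simp, rule exI[of _ "\<lambda>_. 0"]) (simp add: zero_blinfun.rep_eq)
  then show ?thesis
    using assms zero_in_smallo[of "at 0" g] unfolding polynomial_condition_def
    by (auto dest: spec[of _ "\<lambda>_. 0"])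
qed

lemma poly2_eq_0_if_degree_gt:
  assumes "\<forall>i j. i + j < d \<longrightarrow> c i j = 0" and "N < d"
  shows "poly2 c N z w = 0"
  unfolding poly2_def using assms by (intro sum.neutral ballI) auto

theorem mainTheorem4:
  fixes g :: "complex \<Rightarrow> complex" and m :: real
    and c :: "nat \<Rightarrow> nat \<Rightarrow> complex" and N s :: nat
  assumes g_C1: "C1_near0 g"
    and g_even: "\<forall>z. g (- z) = g z"
    and g_small: "g \<in> o[at 0](\<lambda>z. z)"
    and m_gt: "m > 1"
    and g_hom: "\<forall>t>0. \<forall>z. g (complex_of_real t * z) = complex_of_real (t powr m) * g z"
    and s_pos: "s \<ge> 1"
    and p_odd: "\<forall>i j. even (i + j) \<longrightarrow> c i j = 0"
    and p_low: "\<forall>i j. i + j < 2 * s - 1 \<longrightarrow> c i j = 0"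
    and p_lead_nz: "\<exists>i\<le>2 * s - 1. c i (2 * s - 1 - i) \<noteq> 0"
    and pc: "polynomial_condition g (poly2 c N)"
  shows "complex_symmetric (\<lambda>k. c k (2 * s - 1 - k)) (2 * s - 1) \<and>
         (\<forall>z. norm z = 1 \<longrightarrow>
            Im (deriv (\<lambda>w. hpart c (2 * s - 1) z w) (cnj z) * g z) \<ge> 0)"
proof -
  note sign = polynomial_condition_sign_conditions[OF pc]
  have "2 * s - 1 \<le> N"
  proof (rule ccontr)
    assume "\<not> 2 * s - 1 \<le> N"
    then have "\<forall>\<^sub>F z in at (0::complex). False"
      using sign by (simp add: poly2_eq_0_if_degree_gt[OF p_low])
    then show False
      by (simp add: trivial_limit_at)
  qed
  note on_rays = lowest_part_on_ray[OF m_gt g_hom p_low this sign]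
  have nonzero: "norm z = 1 \<Longrightarrow> z \<noteq> 0" for z :: complex
    by auto
  show ?thesis
    using complex_symmetric_if_real_on_circle on_rays nonzero by blast
qed

end
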